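(* Let $g,h\in\mathbb F_q[x,y]$ be nonzero with $(x^l-1)(y^m-1)=g(x,y)h(x,y)$ in $\mathbb F_q[x,y]$, and let $C=\langle g\rangle$, $C^*=\langle h^*\rangle$ be the ideals of $\mathfrak R$ generated by the images of $g$ and $h^*$. Assume $C\neq\{0\}$ and $C^*\ne\{0\}$. Then $C\subseteq C^*$ if and only if $(x^l-1)(y^m-1)$ divides $g(x,y)g^*(x,y)$ in $\mathbb F_q[x,y]$.
   Context: $\mathfrak R=\mathbb F_q[x,y]/\langle x^l-1,y^m-1\rangle$. For nonzero $f\in\mathbb F_q[x,y]$ with $l_1=\deg_x f$, $l_2=\deg_y f$, the reciprocal polynomial is $f^*(x,y)=x^{l_1}y^{l_2}f(x^{-1},y^{-1})$. *)

theory Defs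
  imports "HOL-Computational_Algebra.Polynomial"
begin

text \<open>Bivariate polynomials F[x,y] are represented as 'a poly poly:
  the outer variable is y, the coefficients are polynomials in x.\<close>

type_synonym 'a bipoly = "'a poly poly"

definition varX :: "'a::comm_ring_1 bipoly" where
  "varX = [:[:0, 1:]:]"

definition varY :: "'a::comm_ring_1 bipoly" where
  "varY = [:0, 1:]"

definition deg_x :: "'a::zero bipoly \<Rightarrow> nat" where
  "deg_x f = Max ((\<lambda>j. degree (coeff f j)) ` {..degree f})"

definition deg_y :: "'a::zero bipoly \<Rightarrow> nat" where
  "deg_y f = degree f"

text \<open>Reciprocal f*(x,y) = x^{deg_x f} y^{deg_y f} f(1/x,1/y), written coefficientwise.\<close>
definition recip :: "'a::comm_ring_1 bipoly \<Rightarrow> 'a bipoly" where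
  "recip f = (\<Sum>j\<le>deg_y f. \<Sum>i\<le>deg_x f.
      monom (monom (coeff (coeff f j) i) (deg_x f - i)) (deg_y f - j))"

definition rel_ideal :: "nat \<Rightarrow> nat \<Rightarrow> 'a::comm_ring_1 bipoly set" where
  "rel_ideal l m = {a * (varX ^ l - 1) + b * (varY ^ m - 1) | a b. True}"

text \<open>Elements of R = F[x,y]/<x^l-1,y^m-1> as cosets; cls l m f is the image of f.\<close>
definition cls :: "nat \<Rightarrow> nat \<Rightarrow> 'a::comm_ring_1 bipoly \<Rightarrow> 'a bipoly set" where
  "cls l m f = {f + k | k. k \<in> rel_ideal l m}"

text \<open>The ideal of R generated by the image of f (R being commutative, it is {[a][f]} = {[a f]}).\<close>
definition gen_ideal_R :: "nat \<Rightarrow> nat \<Rightarrow> 'a::comm_ring_1 bipoly \<Rightarrow> 'a bipoly set set" where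
  "gen_ideal_R l m f = {cls l m (a * f) | a. True}"

end

theory Submission
  imports Defs "HOL-Computational_Algebra.Polynomial_Factorial"
begin

text \<open>Write X = x^l - 1 and Y = y^m - 1. Since F[x,y] is factorial and X, Y each involve a
  single variable, every factor of X Y is a product A(x) B(y); hence g = A(x) B(y),
  h* = D(x) E(y) with D | X and E | Y, and g* h* = X Y because X* = -X and Y* = -Y.
  If C \<subseteq> C*, then A B \<equiv> a D E modulo \<langle>X, Y\<rangle>. Applying the F[x]-linear functionals
  "coefficient of y^k after reduction modulo Y" gives D | A unless Y | B, and symmetrically
  E | B unless X | A; both exceptions would put g into \<langle>X, Y\<rangle>, i.e. make C = 0. So h* | g,
  and X Y = g* h* divides g g*. Conversely, cancelling g* in g* h* | g* g gives h* | g.\<close>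

section \<open>Polynomials in y alone\<close>

text \<open>A product A(x) B(y) is written smult A (ypoly B).\<close>

definition ypoly :: "'a::zero poly \<Rightarrow> 'a poly poly" where
  "ypoly p = map_poly (\<lambda>c. [:c:]) p"

lemma coeff_ypoly [simp]: "coeff (ypoly p) n = [:coeff p n:]"
  by (simp add: ypoly_def coeff_map_poly)

lemma ypoly_0 [simp]: "ypoly 0 = 0"
  by (simp add: ypoly_def)

lemma ypoly_eq_0_iff [simp]: "ypoly p = 0 \<longleftrightarrow> p = 0"
  unfolding ypoly_def by (rule map_poly_eq_0_iff) auto

lemma degree_ypoly [simp]: "degree (ypoly p) = degree p"
  by (simp add: ypoly_def degree_map_poly)

lemma ypoly_mult: "ypoly (p * q) = ypoly p * ypoly (q :: 'a::comm_ring_1 poly)"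
  by (rule poly_eqI) (simp add: coeff_mult sum_to_poly mult.commute)

lemma ypoly_minus: "ypoly (- p) = - ypoly (p :: 'a::comm_ring_1 poly)"
  by (rule poly_eqI) simp

lemma degree_cyclic: "n > 0 \<Longrightarrow> degree (monom 1 n - 1 :: 'a::comm_ring_1 poly) = n"
  using degree_add_eq_left[of "-1" "monom (1::'a) n"] by (simp add: degree_monom_eq)

lemma cyclic_nonzero: "n > 0 \<Longrightarrow> monom 1 n - 1 \<noteq> (0 :: 'a::comm_ring_1 poly)"
  by (metis degree_cyclic degree_0 less_irrefl)

lemma ypoly_cyclic: "ypoly (monom 1 n - 1 :: 'a::comm_ring_1 poly) = monom 1 n - 1"
  by (rule poly_eqI)
    (simp add: coeff_monom coeff_1 one_pCons[symmetric] of_bool_def if_distrib cong: if_cong,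
     simp add: one_pCons)

lemma separable_mult:
  fixes A A' B B' :: "'a::comm_ring_1 poly"
  shows "smult A (ypoly B) * smult A' (ypoly B') = smult (A * A') (ypoly (B * B'))"
  by (simp add: ypoly_mult mult_ac)

lemma varX_pow_sub_1: "varX ^ l - 1 = [:monom 1 l - 1 :: 'a::comm_ring_1 poly:]"
  using monom_altdef[of "1::'a" l] by (simp add: varX_def poly_const_pow one_pCons)

lemma varY_pow_sub_1: "varY ^ m - 1 = ypoly (monom 1 m - 1 :: 'a::comm_ring_1 poly)"
  using monom_altdef[of "1::'a poly" m] by (simp add: varY_def ypoly_cyclic)

section \<open>Cyclic reduction\<close>

text \<open>For k < n, cyclic_coeff n k p is the coefficient of degree k of p mod (monom 1 n - 1).
  It is defined over any ring, so that it also applies to polynomials in y with coefficients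
  in F[x], where it is F[x]-linear.\<close>

definition cyclic_coeff :: "nat \<Rightarrow> nat \<Rightarrow> 'a::comm_ring_1 poly \<Rightarrow> 'a" where
  "cyclic_coeff n k p = (\<Sum>j\<le>degree p. if j mod n = k then coeff p j else 0)"

lemma cyclic_coeff_bound:
  assumes "degree p \<le> N"
  shows "cyclic_coeff n k p = (\<Sum>j\<le>N. if j mod n = k then coeff p j else 0)"
  unfolding cyclic_coeff_def
  by (rule sum.mono_neutral_left) (use assms in \<open>auto simp: coeff_eq_0\<close>)

lemma cyclic_coeff_0 [simp]: "cyclic_coeff n k 0 = 0"
  unfolding cyclic_coeff_def by (intro sum.neutral) simp

lemma cyclic_coeff_add: "cyclic_coeff n k (p + q) = cyclic_coeff n k p + cyclic_coeff n k q"
proof -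
  define N where "N = degree p + degree q"
  have "degree (p + q) \<le> N" "degree p \<le> N" "degree q \<le> N"
    using degree_add_le_max[of p q] by (auto simp: N_def)
  then show ?thesis
    by (auto simp: cyclic_coeff_bound[where N = N] sum.distrib[symmetric] intro!: sum.cong)
qed

lemma cyclic_coeff_smult: "cyclic_coeff n k (smult c p) = c * cyclic_coeff n k p"
  using degree_smult_le[of c p]
  by (simp add: cyclic_coeff_bound[where N = "degree p"] cyclic_coeff_def[of n k p]
      sum_distrib_left if_distrib cong: if_cong)

lemma cyclic_coeff_diff: "cyclic_coeff n k (p - q) = cyclic_coeff n k p - cyclic_coeff n k q"
  using cyclic_coeff_add[of n k "p - q" q] by simp

lemma cyclic_coeff_sum:
  "finite A \<Longrightarrow> cyclic_coeff n k (sum f A) = (\<Sum>x\<in>A. cyclic_coeff n k (f x))"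
  by (induction A rule: finite_induct) (simp_all add: cyclic_coeff_add)

lemma cyclic_coeff_monom: "cyclic_coeff n k (monom c j) = (if j mod n = k then c else 0)"
proof -
  have "cyclic_coeff n k (monom c j) = (\<Sum>i\<le>j. if i mod n = k then coeff (monom c j) i else 0)"
    by (rule cyclic_coeff_bound) (rule degree_monom_le)
  also have "\<dots> = (\<Sum>i\<le>j. if i = j then (if j mod n = k then c else 0) else 0)"
    by (rule sum.cong) (auto simp: coeff_monom)
  finally show ?thesis
    by simp
qed

lemma cyclic_coeff_mult_cyclic: "cyclic_coeff n k (q * (monom 1 n - 1)) = 0"
proof -
  have "q * (monom 1 n - 1) = (\<Sum>i\<le>degree q. monom (coeff q i) (i + n) - monom (coeff q i) i)"
    by (subst (1) poly_as_sum_of_monoms[symmetric])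
       (simp add: sum_distrib_right right_diff_distrib mult_monom sum_subtractf)
  then show ?thesis
    by (simp add: cyclic_coeff_sum cyclic_coeff_diff cyclic_coeff_monom)
qed

lemma cyclic_coeff_low:
  assumes "degree r < n" "k < n"
  shows "cyclic_coeff n k r = coeff r k"
proof -
  have "cyclic_coeff n k r = (\<Sum>j\<le>n - 1. if j mod n = k then coeff r j else 0)"
    by (rule cyclic_coeff_bound) (use assms in simp)
  also have "\<dots> = (\<Sum>j\<le>n - 1. if j = k then coeff r j else 0)"
    by (rule sum.cong) (use assms in auto)
  also have "\<dots> = coeff r k"
    using assms by simp
  finally show ?thesis .
qed

lemma cyclic_coeff_ypoly: "cyclic_coeff n k (ypoly B) = [:cyclic_coeff n k B:]"
  by (simp add: cyclic_coeff_def sum_to_poly[symmetric] if_distrib[of "\<lambda>x. [:x:]"] cong: if_cong)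

lemma cyclic_dvd_if_cyclic_coeffs_zero:
  fixes p :: "'a::field poly"
  assumes "n > 0" and zero: "\<And>k. k < n \<Longrightarrow> cyclic_coeff n k p = 0"
  shows "monom 1 n - 1 dvd p"
proof -
  let ?X = "monom 1 n - 1 :: 'a poly"
  have "degree ?X = n"
    using assms(1) by (rule degree_cyclic)
  then have degree_rem: "degree (p mod ?X) < n"
    using assms(1) degree_mod_less[of ?X p] cyclic_nonzero[of n] by (cases "p mod ?X = 0") auto
  have "cyclic_coeff n k (p mod ?X) = cyclic_coeff n k p" for k
    using cyclic_coeff_mult_cyclic[of n k "p div ?X"]
    by (subst (2) div_mult_mod_eq[symmetric, of p ?X]) (simp add: cyclic_coeff_add)
  then have "coeff (p mod ?X) k = 0" for k
    using zero cyclic_coeff_low[OF degree_rem] degree_rem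
    by (cases "k < n") (simp_all add: coeff_eq_0)
  then show ?thesis
    by (simp add: poly_eq_iff mod_eq_0_iff_dvd[symmetric])
qed

lemma dvd_x_factor_or_cyclic_dvd_y_factor:
  fixes A B D :: "'a::field poly"
  assumes "n > 0" and eq: "smult A (ypoly B) = smult D p + q * ypoly (monom 1 n - 1)"
  shows "D dvd A \<or> monom 1 n - 1 dvd B"
proof (cases "\<exists>k<n. cyclic_coeff n k B \<noteq> 0")
  case True
  then obtain k where "cyclic_coeff n k B \<noteq> 0"
    by blast
  moreover have "smult (cyclic_coeff n k B) A = D * cyclic_coeff n k p"
    using arg_cong[OF eq, of "cyclic_coeff n k"]
    by (simp add: cyclic_coeff_add cyclic_coeff_smult cyclic_coeff_ypoly ypoly_cyclic
        cyclic_coeff_mult_cyclic mult.commute[of A])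
  ultimately show ?thesis
    by (metis dvd_smult_cancel dvd_triv_left)
next
  case False
  then show ?thesis
    using cyclic_dvd_if_cyclic_coeffs_zero[OF assms(1)] by blast
qed

lemma map_poly_cyclic_coeff_mult_ypoly:
  "map_poly (cyclic_coeff n k) (p * ypoly E) = map_poly (cyclic_coeff n k) p * E"
  unfolding mult.commute[of p] mult.commute[of _ E]
  by (rule poly_eqI) (simp add: coeff_map_poly coeff_mult cyclic_coeff_sum cyclic_coeff_smult)

lemma dvd_y_factor_or_cyclic_dvd_x_factor:
  fixes A B E :: "'a::field poly"
  assumes "n > 0" and eq: "smult A (ypoly B) = p * ypoly E + smult (monom 1 n - 1) q"
  shows "E dvd B \<or> monom 1 n - 1 dvd A"
proof (cases "\<exists>k<n. cyclic_coeff n k A \<noteq> 0")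
  case True
  then obtain k where "cyclic_coeff n k A \<noteq> 0"
    by blast
  moreover have "smult (cyclic_coeff n k A) B = map_poly (cyclic_coeff n k) p * E"
  proof -
    have "smult (cyclic_coeff n k A) B = map_poly (cyclic_coeff n k) (smult A (ypoly B))"
      by (rule poly_eqI) (simp add: coeff_map_poly cyclic_coeff_smult mult.commute)
    also have "\<dots> = map_poly (cyclic_coeff n k) (p * ypoly E)"
      unfolding eq
      by (rule poly_eqI) (simp add: coeff_map_poly cyclic_coeff_add mult.commute[of "monom 1 n - 1"]
          cyclic_coeff_mult_cyclic)
    finally show ?thesis
      by (simp add: map_poly_cyclic_coeff_mult_ypoly)
  qed
  ultimately show ?thesis
    by (metis dvd_smult_cancel dvd_triv_right)
next
  case False
  then show ?thesis
    using cyclic_dvd_if_cyclic_coeffs_zero[OF assms(1)] by blast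
qed

section \<open>Factors of separable polynomials\<close>

lemma degree_coeff_le_deg_x: "degree (coeff f j) \<le> deg_x f"
proof (cases "j \<le> degree f")
  case True
  then show ?thesis
    unfolding deg_x_def by (intro Max_ge) auto
qed (simp add: coeff_eq_0)

lemma deg_x_le: "(\<And>j. degree (coeff f j) \<le> d) \<Longrightarrow> deg_x f \<le> d"
  unfolding deg_x_def by (intro Max.boundedI) auto

lemma deg_x_separable:
  assumes "A \<noteq> 0" "B \<noteq> 0"
  shows "deg_x (smult A (ypoly B)) = degree (A :: 'a::idom poly)"
proof (rule antisym)
  show "deg_x (smult A (ypoly B)) \<le> degree A"
    by (rule deg_x_le) (simp add: degree_mult_le[THEN order_trans])
  show "degree A \<le> deg_x (smult A (ypoly B))"
    using degree_coeff_le_deg_x[of "smult A (ypoly B)" "degree B"] assms by (simp add: degree_mult_eq)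
qed

definition x_slice :: "nat \<Rightarrow> 'a::zero poly poly \<Rightarrow> 'a poly" where
  "x_slice i f = map_poly (\<lambda>c. coeff c i) f"

lemma coeff_x_slice [simp]: "coeff (x_slice i f) j = coeff (coeff f j) i"
  by (simp add: x_slice_def coeff_map_poly)

lemma x_slice_deg_x_nonzero:
  assumes "f \<noteq> 0"
  shows "x_slice (deg_x f) f \<noteq> 0"
proof -
  have "deg_x f \<in> (\<lambda>j. degree (coeff f j)) ` {..degree f}"
    unfolding deg_x_def by (intro Max_in) auto
  then obtain j where j: "degree (coeff f j) = deg_x f"
    by auto
  show ?thesis
  proof (cases "coeff f j = 0")
    case False
    then have "coeff (x_slice (deg_x f) f) j \<noteq> 0"
      by (simp add: j[symmetric])
    then show ?thesis
      by (metis coeff_0)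
  next
    case True
    then have "degree (lead_coeff f) = 0"
      using j degree_coeff_le_deg_x[of f "degree f"] by simp
    then have "coeff (lead_coeff f) 0 \<noteq> 0"
      using assms degree_0_id[of "lead_coeff f"] by force
    then have "coeff (x_slice (deg_x f) f) (degree f) \<noteq> 0"
      using True j by simp
    then show ?thesis
      by (metis coeff_0)
  qed
qed

lemma coeff_mult_at_degree_bounds:
  fixes c d :: "'a::idom poly"
  assumes "degree c \<le> a" "degree d \<le> b"
  shows "coeff (c * d) (a + b) = coeff c a * coeff d b"
proof (cases "degree c = a \<and> degree d = b")
  case True
  then show ?thesis
    using coeff_mult_degree_sum[of c d] by simp
next
  case False
  then have "degree c < a \<or> degree d < b"
    using assms by auto
  moreover from this have "degree (c * d) < a + b"
    using degree_mult_le[of c d] assms by linarith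
  ultimately show ?thesis
    by (auto simp: coeff_eq_0)
qed

lemma x_slice_mult:
  fixes p q :: "'a::idom poly poly"
  assumes "\<And>j. degree (coeff p j) \<le> a" "\<And>j. degree (coeff q j) \<le> b"
  shows "x_slice (a + b) (p * q) = x_slice a p * x_slice b q"
  by (rule poly_eqI)
    (simp add: coeff_mult[of p q] coeff_mult[of "x_slice a p"] coeff_sum
      coeff_mult_at_degree_bounds assms)

lemma deg_x_mult_ge:
  fixes p q :: "'a::idom poly poly"
  assumes "p \<noteq> 0" "q \<noteq> 0"
  shows "deg_x p + deg_x q \<le> deg_x (p * q)"
proof -
  have "x_slice (deg_x p + deg_x q) (p * q) \<noteq> 0"
    using x_slice_deg_x_nonzero[OF assms(1)] x_slice_deg_x_nonzero[OF assms(2)]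
    by (simp add: x_slice_mult degree_coeff_le_deg_x)
  then obtain j where "coeff (coeff (p * q) j) (deg_x p + deg_x q) \<noteq> 0"
    by (auto simp: poly_eq_iff)
  then have "deg_x p + deg_x q \<le> degree (coeff (p * q) j)"
    by (rule le_degree)
  then show ?thesis
    using degree_coeff_le_deg_x order_trans by blast
qed

lemma ypoly_x_slice_0: "deg_x f = 0 \<Longrightarrow> ypoly (x_slice 0 f) = f"
  using degree_coeff_le_deg_x[of f]
  by (intro poly_eqI) (simp add: degree_0_id)

lemma irreducible_factor_exists:
  fixes X :: "'a::field poly"
  assumes "degree X > 0"
  obtains p q where "X = p * q" "irreducible p" "degree q < degree X"
proof -
  obtain p where p: "p dvd X" "degree p > 0"
    and least: "\<And>a. a dvd X \<Longrightarrow> degree a > 0 \<Longrightarrow> degree p \<le> degree a"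
    using ex_has_least_nat[of "\<lambda>p. p dvd X \<and> degree p > 0" X degree] assms by auto
  have "irreducible p"
  proof (rule irreducibleI)
    show "p \<noteq> 0"
      using p(2) by auto
    then show "\<not> is_unit p"
      using p(2) by (simp add: is_unit_iff_degree)
    fix a b
    assume ab: "p = a * b"
    with \<open>p \<noteq> 0\<close> have "a \<noteq> 0" "b \<noteq> 0" "degree p = degree a + degree b"
      by (auto simp: degree_mult_eq)
    moreover have "a dvd X"
      using ab p(1) dvd_mult_left by blast
    ultimately show "is_unit a \<or> is_unit b"
      using least[of a] p(2) by (fastforce simp: is_unit_iff_degree)
  qed
  moreover obtain q where "X = p * q"
    using p(1) ..
  moreover from this have "degree q < degree X"
    using assms p(2) by (cases "p = 0 \<or> q = 0") (auto simp: degree_mult_eq)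
  ultimately show ?thesis
    using that by blast
qed

lemma separable_factor_exists:
  fixes f k :: "'a::field poly poly"
  assumes "f * k = smult X (ypoly Y)" "f * k \<noteq> 0"
  shows "\<exists>A B. f = smult A (ypoly B)"
  using assms
proof (induction "degree X" arbitrary: X f k rule: less_induct)
  case less
  show ?case
  proof (cases "degree X = 0")
    case True
    have "f \<noteq> 0" "k \<noteq> 0"
      using less.prems(2) by auto
    then have "deg_x f + deg_x k \<le> deg_x (smult X (ypoly Y))"
      using less.prems(1) by (metis deg_x_mult_ge)
    also have "\<dots> \<le> 0"
      using True by (intro deg_x_le) (simp add: degree_mult_le[THEN order_trans])
    finally have "f = smult 1 (ypoly (x_slice 0 f))"
      using ypoly_x_slice_0[of f] by simp
    then show ?thesis
      by blast
  next
    case False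
    then obtain p X' where X: "X = p * X'" "irreducible p" "degree X' < degree X"
      using irreducible_factor_exists by blast
    have p0: "[:p:] \<noteq> 0"
      using X(2) by (auto simp: irreducible_def)
    have "prime_elem [:p:]"
      using X(2) by (intro lift_prime_elem_poly field_poly_irreducible_imp_prime)
    moreover have fk: "f * k = [:p:] * smult X' (ypoly Y)"
      using less.prems(1) X(1) by (simp add: mult_ac)
    ultimately have "[:p:] dvd f \<or> [:p:] dvd k"
      by (metis dvd_triv_left prime_elem_dvd_mult_iff)
    then show ?thesis
    proof
      assume "[:p:] dvd f"
      then obtain f' where f': "f = [:p:] * f'" ..
      then have "[:p:] * (f' * k) = [:p:] * smult X' (ypoly Y)"
        using fk by (simp only: mult.assoc)
      then have "f' * k = smult X' (ypoly Y)"
        using p0 mult_left_cancel by blast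
      then obtain A B where "f' = smult A (ypoly B)"
        using less.hyps[OF X(3)] less.prems(2) f' by fastforce
      then have "f = smult (p * A) (ypoly B)"
        using f' by (simp add: mult.commute)
      then show ?thesis
        by blast
    next
      assume "[:p:] dvd k"
      then obtain k' where k': "k = [:p:] * k'" ..
      then have "[:p:] * (f * k') = [:p:] * smult X' (ypoly Y)"
        using fk by (simp only: mult.left_commute)
      then have "f * k' = smult X' (ypoly Y)"
        using p0 mult_left_cancel by blast
      then show ?thesis
        using less.hyps[OF X(3)] less.prems(2) k' by fastforce
    qed
  qed
qed

lemma separable_eq_imp_dvd:
  fixes U V X Y :: "'a::field poly"
  assumes eq: "smult U (ypoly V) = smult X (ypoly Y)" and "X \<noteq> 0" "Y \<noteq> 0"
  shows "U dvd X" "V dvd Y"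
proof -
  have "smult (coeff V j) U = smult (coeff Y j) X" for j
    using arg_cong[OF eq, of "\<lambda>p. coeff p j"] by (simp add: mult.commute)
  then have "U dvd smult (lead_coeff Y) X"
    by (metis dvd_refl dvd_smult)
  then show "U dvd X"
    using \<open>Y \<noteq> 0\<close> by (simp add: dvd_smult_cancel)
  have "smult (coeff U i) V = smult (coeff X i) Y" for i
  proof (rule poly_eqI)
    fix j
    show "coeff (smult (coeff U i) V) j = coeff (smult (coeff X i) Y) j"
      using arg_cong[OF eq, of "\<lambda>p. coeff (coeff p j) i"] by (simp add: mult.commute)
  qed
  then have "V dvd smult (lead_coeff X) Y"
    by (metis dvd_refl dvd_smult)
  then show "V dvd Y"
    using \<open>X \<noteq> 0\<close> by (simp add: dvd_smult_cancel)
qed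

section \<open>Reciprocals\<close>

lemma sum_atMost_reverse_delta:
  fixes N j :: nat
  shows "(\<Sum>i\<le>N. if N - i = j then F i else 0) = (if j \<le> N then F (N - j) else 0)"
proof (cases "j \<le> N")
  case True
  then have "(\<Sum>i\<le>N. if N - i = j then F i else 0) = (\<Sum>i\<le>N. if i = N - j then F i else 0)"
    by (intro sum.cong) auto
  then show ?thesis
    using True by simp
next
  case False
  then have "(\<Sum>i\<le>N. if N - i = j then F i else 0) = 0"
    by (intro sum.neutral) auto
  with False show ?thesis
    by simp
qed

lemma coeff_coeff_recip:
  "coeff (coeff (recip f) j) i =
    (if j \<le> deg_y f \<and> i \<le> deg_x f then coeff (coeff f (deg_y f - j)) (deg_x f - i) else 0)"
proof -
  have "recip f = (\<Sum>j'\<le>deg_y f.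
      monom (\<Sum>i'\<le>deg_x f. monom (coeff (coeff f j') i') (deg_x f - i')) (deg_y f - j'))"
    unfolding recip_def by (simp add: monom_sum)
  then have "coeff (recip f) j = (if j \<le> deg_y f
      then \<Sum>i'\<le>deg_x f. monom (coeff (coeff f (deg_y f - j)) i') (deg_x f - i') else 0)"
    by (simp add: coeff_sum coeff_monom sum_atMost_reverse_delta)
  then show ?thesis
    by (simp add: coeff_sum coeff_monom sum_atMost_reverse_delta)
qed

lemma recip_separable:
  fixes A B :: "'a::idom poly"
  assumes "A \<noteq> 0" "B \<noteq> 0"
  shows "recip (smult A (ypoly B)) = smult (reflect_poly A) (ypoly (reflect_poly B))"
  by (intro poly_eqI)
    (auto simp: coeff_coeff_recip deg_x_separable[OF assms] deg_y_def coeff_reflect_poly assms)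

lemma reflect_poly_cyclic:
  "n > 0 \<Longrightarrow> reflect_poly (monom 1 n - 1 :: 'a::comm_ring_1 poly) = - (monom 1 n - 1)"
  by (rule poly_eqI) (auto simp: coeff_reflect_poly degree_cyclic coeff_monom coeff_1)

lemma recip_mult_recip_of_cyclic_factors:
  fixes g h :: "'a::field bipoly"
  assumes gh: "g * h = smult (monom 1 l - 1) (ypoly (monom 1 m - 1))" and "l > 0" "m > 0"
  shows "recip g * recip h = g * h"
proof -
  have X: "monom 1 l - 1 \<noteq> (0 :: 'a poly)" and Y: "monom 1 m - 1 \<noteq> (0 :: 'a poly)"
    using cyclic_nonzero assms(2,3) by blast+
  then have "g * h \<noteq> 0"
    using gh by simp
  then obtain A B A' B' where g: "g = smult A (ypoly B)" and h: "h = smult A' (ypoly B')"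
    using separable_factor_exists[OF gh] separable_factor_exists[of h g] gh by (metis mult.commute)
  with \<open>g * h \<noteq> 0\<close> have nonzero: "A \<noteq> 0" "B \<noteq> 0" "A' \<noteq> 0" "B' \<noteq> 0"
    by auto
  have "recip g * recip h = smult (reflect_poly (A * A')) (ypoly (reflect_poly (B * B')))"
    unfolding g h recip_separable[OF nonzero(1,2)] recip_separable[OF nonzero(3,4)]
      separable_mult reflect_poly_mult ..
  also have "\<dots> = recip (g * h)"
    unfolding g h separable_mult using nonzero by (simp add: recip_separable)
  also have "\<dots> = smult (- (monom 1 l - 1)) (ypoly (- (monom 1 m - 1)))"
    unfolding gh recip_separable[OF X Y] reflect_poly_cyclic[OF assms(2)] reflect_poly_cyclic[OF assms(3)] ..
  also have "\<dots> = g * h"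
    unfolding gh ypoly_minus smult_minus_left smult_minus_right minus_minus ..
  finally show ?thesis .
qed

lemma recip_cofactor_separable:
  fixes g h :: "'a::field bipoly"
  assumes gh: "g * h = smult (monom 1 l - 1) (ypoly (monom 1 m - 1))" and "l > 0" "m > 0"
  obtains D E where "recip h = smult D (ypoly E)" "D dvd monom 1 l - 1" "E dvd monom 1 m - 1"
proof -
  have X: "monom 1 l - 1 \<noteq> (0 :: 'a poly)" and Y: "monom 1 m - 1 \<noteq> (0 :: 'a poly)"
    using cyclic_nonzero assms(2,3) by blast+
  have hg: "recip h * recip g = smult (monom 1 l - 1) (ypoly (monom 1 m - 1))"
    using recip_mult_recip_of_cyclic_factors[OF assms] gh by (simp add: mult.commute)
  then have "recip h * recip g \<noteq> 0"
    using X Y by simp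
  then obtain D E D' E' where h: "recip h = smult D (ypoly E)" and g: "recip g = smult D' (ypoly E')"
    using separable_factor_exists[OF hg] separable_factor_exists[of "recip g" "recip h"] hg
    by (metis mult.commute)
  then have "smult (D * D') (ypoly (E * E')) = smult (monom 1 l - 1) (ypoly (monom 1 m - 1))"
    using hg by (simp only: separable_mult)
  then have "D * D' dvd monom 1 l - 1" "E * E' dvd monom 1 m - 1"
    using separable_eq_imp_dvd X Y by blast+
  then have "D dvd monom 1 l - 1" "E dvd monom 1 m - 1"
    by (auto dest: dvd_mult_left)
  with h show thesis
    by (rule that)
qed

section \<open>Ideals of the quotient ring\<close>

lemma mem_rel_ideal_iff:
  "k \<in> rel_ideal l m \<longleftrightarrow>
    (\<exists>u v. k = u * [:monom 1 l - 1:] + v * ypoly (monom 1 m - 1 :: 'a::comm_ring_1 poly))"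
  by (simp add: rel_ideal_def varX_pow_sub_1 varY_pow_sub_1)

lemma rel_ideal_0: "0 \<in> rel_ideal l m"
proof -
  have "0 = 0 * (varX ^ l - 1) + 0 * (varY ^ m - 1 :: 'a::comm_ring_1 bipoly)"
    by simp
  then show ?thesis
    unfolding rel_ideal_def by blast
qed

lemma rel_ideal_add:
  assumes "a \<in> rel_ideal l m" "b \<in> rel_ideal l m"
  shows "a + b \<in> rel_ideal l m"
proof -
  obtain a1 a2 b1 b2 where "a = a1 * (varX ^ l - 1) + a2 * (varY ^ m - 1)"
    and "b = b1 * (varX ^ l - 1) + b2 * (varY ^ m - 1)"
    using assms unfolding rel_ideal_def by blast
  then have "a + b = (a1 + b1) * (varX ^ l - 1) + (a2 + b2) * (varY ^ m - 1)"
    by (simp add: algebra_simps)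
  then show ?thesis
    unfolding rel_ideal_def by blast
qed

lemma rel_ideal_mult_left:
  assumes "b \<in> rel_ideal l m"
  shows "c * b \<in> rel_ideal l m"
proof -
  obtain b1 b2 where b: "b = b1 * (varX ^ l - 1) + b2 * (varY ^ m - 1)"
    using assms unfolding rel_ideal_def by blast
  have "c * b = (c * b1) * (varX ^ l - 1) + (c * b2) * (varY ^ m - 1)"
    unfolding b by (simp only: distrib_left mult.assoc)
  then show ?thesis
    unfolding rel_ideal_def by blast
qed

lemma cls_eq_iff: "cls l m f = cls l m f' \<longleftrightarrow> f - f' \<in> rel_ideal l m"
proof
  assume "cls l m f = cls l m f'"
  moreover have "f \<in> cls l m f"
    unfolding cls_def using rel_ideal_0 by force
  ultimately obtain k where "f = f' + k" "k \<in> rel_ideal l m"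
    unfolding cls_def by auto
  then show "f - f' \<in> rel_ideal l m"
    by simp
next
  have subset: "cls l m f \<subseteq> cls l m f'" if "f - f' \<in> rel_ideal l m" for f f'
  proof
    fix x
    assume "x \<in> cls l m f"
    then obtain k where "x = f' + ((f - f') + k)" "k \<in> rel_ideal l m"
      unfolding cls_def by auto
    then show "x \<in> cls l m f'"
      unfolding cls_def using that rel_ideal_add by blast
  qed
  assume "f - f' \<in> rel_ideal l m"
  moreover from this have "f' - f \<in> rel_ideal l m"
    using rel_ideal_mult_left[of "f - f'" l m "-1"] by simp
  ultimately show "cls l m f = cls l m f'"
    using subset by blast
qed

lemma gen_ideal_R_subset_iff:
  "gen_ideal_R l m g \<subseteq> gen_ideal_R l m f \<longleftrightarrow> (\<exists>a. g - a * f \<in> rel_ideal l m)"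
proof
  assume "gen_ideal_R l m g \<subseteq> gen_ideal_R l m f"
  moreover have "cls l m (1 * g) \<in> gen_ideal_R l m g"
    unfolding gen_ideal_R_def by blast
  ultimately obtain a where "cls l m (1 * g) = cls l m (a * f)"
    unfolding gen_ideal_R_def by blast
  then show "\<exists>a. g - a * f \<in> rel_ideal l m"
    by (auto simp: cls_eq_iff)
next
  assume "\<exists>a. g - a * f \<in> rel_ideal l m"
  then obtain a where a: "g - a * f \<in> rel_ideal l m" ..
  show "gen_ideal_R l m g \<subseteq> gen_ideal_R l m f"
  proof
    fix x
    assume "x \<in> gen_ideal_R l m g"
    then obtain c where x: "x = cls l m (c * g)"
      unfolding gen_ideal_R_def by blast
    have "c * g - (c * a) * f \<in> rel_ideal l m"
      using rel_ideal_mult_left[OF a, of c] by (simp add: algebra_simps)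
    then show "x \<in> gen_ideal_R l m f"
      unfolding x gen_ideal_R_def cls_eq_iff[symmetric] by blast
  qed
qed

lemma gen_ideal_R_eq_zero:
  assumes "g \<in> rel_ideal l m"
  shows "gen_ideal_R l m g = {cls l m 0}"
proof -
  have "cls l m (c * g) = cls l m 0" for c
    using rel_ideal_mult_left[OF assms] by (simp add: cls_eq_iff)
  then show ?thesis
    unfolding gen_ideal_R_def by auto
qed

lemma separable_mem_rel_ideal:
  fixes A B :: "'a::comm_ring_1 poly"
  assumes "monom 1 l - 1 dvd A \<or> monom 1 m - 1 dvd B"
  shows "smult A (ypoly B) \<in> rel_ideal l m"
  using assms
proof
  assume "monom 1 l - 1 dvd A"
  then obtain A' where "A = (monom 1 l - 1) * A'" ..
  then have "smult A (ypoly B) = smult A' (ypoly B) * [:monom 1 l - 1:] + 0 * ypoly (monom 1 m - 1)"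
    by (simp add: mult.commute)
  then show ?thesis
    unfolding mem_rel_ideal_iff by blast
next
  assume "monom 1 m - 1 dvd B"
  then obtain B' where "B = (monom 1 m - 1) * B'" ..
  then have "smult A (ypoly B) = 0 * [:monom 1 l - 1:] + smult A (ypoly B') * ypoly (monom 1 m - 1)"
    by (simp add: ypoly_mult mult.commute)
  then show ?thesis
    unfolding mem_rel_ideal_iff by blast
qed

lemma separable_dvd_if_cong:
  fixes A B D E :: "'a::field poly"
  assumes "l > 0" "m > 0" and "D dvd monom 1 l - 1" "E dvd monom 1 m - 1"
    and cong: "smult A (ypoly B) - a * smult D (ypoly E) \<in> rel_ideal l m"
    and nontrivial: "smult A (ypoly B) \<notin> rel_ideal l m"
  shows "smult D (ypoly E) dvd smult A (ypoly B)"
proof -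
  obtain u v where
    eq: "smult A (ypoly B) = u * [:monom 1 l - 1:] + v * ypoly (monom 1 m - 1) + a * smult D (ypoly E)"
    using cong unfolding mem_rel_ideal_iff diff_eq_eq by blast
  obtain X' where X': "monom 1 l - 1 = D * X'"
    using assms(3) ..
  obtain Y' where Y': "monom 1 m - 1 = E * Y'"
    using assms(4) ..
  have "D dvd A \<or> monom 1 m - 1 dvd B"
    using \<open>m > 0\<close>
  proof (rule dvd_x_factor_or_cyclic_dvd_y_factor)
    show "smult A (ypoly B) = smult D (a * ypoly E + smult X' u) + v * ypoly (monom 1 m - 1)"
      unfolding eq X' by (simp add: algebra_simps smult_add_right)
  qed
  moreover have "E dvd B \<or> monom 1 l - 1 dvd A"
    using \<open>l > 0\<close>
  proof (rule dvd_y_factor_or_cyclic_dvd_x_factor)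
    show "smult A (ypoly B) = (smult D a + v * ypoly Y') * ypoly E + smult (monom 1 l - 1) u"
      unfolding eq Y' by (simp add: algebra_simps ypoly_mult)
  qed
  ultimately have "D dvd A" "E dvd B"
    using nontrivial separable_mem_rel_ideal by blast+
  then show ?thesis
    by (metis dvdE dvdI separable_mult)
qed

lemma gen_ideal_R_subset_iff_dvd:
  fixes A B D E :: "'a::field poly"
  assumes "l > 0" "m > 0" and "D dvd monom 1 l - 1" "E dvd monom 1 m - 1"
    and "smult A (ypoly B) \<notin> rel_ideal l m"
  shows "gen_ideal_R l m (smult A (ypoly B)) \<subseteq> gen_ideal_R l m (smult D (ypoly E)) \<longleftrightarrow>
    smult D (ypoly E) dvd smult A (ypoly B)"
  unfolding gen_ideal_R_subset_iff
  using separable_dvd_if_cong[OF assms(1-4) _ assms(5)] rel_ideal_0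
  by (metis dvd_def mult.commute right_minus_eq)

theorem mainTheorem5:
  fixes g h :: "'a::{finite, field} bipoly" and l m :: nat
  assumes "g \<noteq> 0" and "h \<noteq> 0"
    and "(varX ^ l - 1) * (varY ^ m - 1) = g * h"
    and "gen_ideal_R l m g \<noteq> {cls l m 0}"
    and "gen_ideal_R l m (recip h) \<noteq> {cls l m 0}"
  shows "gen_ideal_R l m g \<subseteq> gen_ideal_R l m (recip h)
     \<longleftrightarrow> (varX ^ l - 1) * (varY ^ m - 1) dvd g * recip g"
proof -
  have gh: "g * h = smult (monom 1 l - 1) (ypoly (monom 1 m - 1))"
    using assms(3) by (simp add: varX_pow_sub_1 varY_pow_sub_1)
  have "l > 0" "m > 0"
    using gh assms(1,2) by (auto intro!: gr0I)
  obtain A B where g: "g = smult A (ypoly B)"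
    using separable_factor_exists gh assms(1,2) by fastforce
  obtain D E where h: "recip h = smult D (ypoly E)" "D dvd monom 1 l - 1" "E dvd monom 1 m - 1"
    using recip_cofactor_separable[OF gh \<open>l > 0\<close> \<open>m > 0\<close>] .
  have recip_gh: "recip g * recip h = g * h"
    using gh \<open>l > 0\<close> \<open>m > 0\<close> by (rule recip_mult_recip_of_cyclic_factors)
  have "smult A (ypoly B) \<notin> rel_ideal l m"
    using assms(4) gen_ideal_R_eq_zero g by blast
  then have "gen_ideal_R l m g \<subseteq> gen_ideal_R l m (recip h) \<longleftrightarrow> recip h dvd g"
    unfolding g h(1) by (rule gen_ideal_R_subset_iff_dvd[OF \<open>l > 0\<close> \<open>m > 0\<close> h(2,3)])
  also have "\<dots> \<longleftrightarrow> recip g * recip h dvd recip g * g"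
    unfolding dvd_mult_cancel_left using recip_gh assms(1,2) by auto
  also have "\<dots> \<longleftrightarrow> (varX ^ l - 1) * (varY ^ m - 1) dvd g * recip g"
    unfolding recip_gh assms(3) by (simp only: mult.commute)
  finally show ?thesis .
qed

end
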